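(* Let $\sigma_0,\sigma_\epsilon>0$, $\theta_0\in\mathbb{R}$. Let the prior be $\Theta\sim N(\theta_0,\sigma_0^2)$ and the signal $X=\Theta+\epsilon$ with $\epsilon\sim\mathrm{Cauchy}(0,\sigma_\epsilon)$ independent of $\Theta$. For $x\in\mathbb{R}$ put $x_0=(x-\theta_0)/\sigma_0$, $a=\sigma_\epsilon/\sigma_0$ and $z=(a+ix_0)/\sqrt2$. Then the posterior mean $\theta_1=\mathbb{E}[\Theta\mid X=x]$ equals $$\theta_1=x+\sigma_\epsilon\,\frac{\operatorname{Im}\{\operatorname{erfcx}(z)\}}{\operatorname{Re}\{\operatorname{erfcx}(z)\}},$$ where $\operatorname{erfcx}(z)=e^{z^2}\bigl(1-\frac{2}{\sqrt\pi}\int_0^z e^{-t^2}\,dt\bigr)$.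
   Context: $\mathrm{Cauchy}(\mu,s)$ has density $t\mapsto\frac{1}{\pi s[1+((t-\mu)/s)^2]}$. The posterior mean is $\theta_1=\frac{\int\theta f_\Theta(\theta)l_\epsilon(x-\theta)d\theta}{\int f_\Theta(\theta)l_\epsilon(x-\theta)d\theta}$ with $f_\Theta$ the prior density and $l_\epsilon$ the noise density; the integral in erfcx is along any path (the integrand is entire). *)

theory Defs
  imports "HOL-Probability.Probability" "HOL-Complex_Analysis.Complex_Analysis"
begin

definition cauchy_density :: "real \<Rightarrow> real \<Rightarrow> real \<Rightarrow> real" where
  "cauchy_density mu s t = 1 / (pi * s * (1 + ((t - mu) / s)^2))"

text \<open>Posterior mean of Theta given X = x, where X = Theta + noise, with prior density f
  and noise density l (Theta and noise independent).\<close>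
definition posterior_mean :: "(real \<Rightarrow> real) \<Rightarrow> (real \<Rightarrow> real) \<Rightarrow> real \<Rightarrow> real" where
  "posterior_mean f l x =
     (LINT \<theta>|lborel. \<theta> * f \<theta> * l (x - \<theta>)) / (LINT \<theta>|lborel. f \<theta> * l (x - \<theta>))"

text \<open>Scaled complementary error function; the integral from 0 to z is taken along the
  straight segment (the integrand is entire, so any path gives the same value).\<close>
definition erfcx :: "complex \<Rightarrow> complex" where
  "erfcx z = exp (z^2) * (1 - 2 / complex_of_real (sqrt pi) *
                contour_integral (linepath 0 z) (\<lambda>t. exp (- (t^2))))"

end

theory Submission
  imports Defs
begin

(* Write c = sigma_eps + i (x - theta). The Cauchy likelihood is Re (1 / c) / pi and (theta - x)
   times it is sigma_eps Im (1 / c) / pi, so the posterior mean is x + sigma_eps Im J / Re J with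
   J = integral of f(theta) / c over theta. Expanding 1 / c = integral_0^oo exp (- t c) dt and
   exchanging the integrals turns J into a Laplace transform of the characteristic function of the
   normal prior; the substitution t = sqrt 2 u / sigma0 makes it a positive multiple of
   integral_0^oo exp (- (u^2 + 2 u z)) du = (sqrt pi / 2) erfcx z. This last identity is a contour
   shift: if G is a primitive of the entire function exp (- w^2), then G (t + z) - G t, the integral
   over the segment [t, t + z], decays like exp (- t^2). *)

lemma set_integral_Ioi_FTC:
  fixes f F :: "real \<Rightarrow> 'a::euclidean_space"
  assumes "\<And>t. 0 < t \<Longrightarrow> (F has_vector_derivative f t) (at t)"
    and "\<And>t. 0 < t \<Longrightarrow> isCont f t"
    and "set_integrable lborel {0<..} f"
    and "(F \<longlongrightarrow> A) (at_right 0)" and "(F \<longlongrightarrow> B) at_top"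
  shows "(LINT t:{0<..}|lborel. f t) = B - A"
proof -
  have "einterval 0 \<infinity> = {0<..}"
    by (auto simp: einterval_def zero_ereal_def)
  with assms have "(LBINT t=0..\<infinity>. f t) = B - A"
    by (intro interval_integral_FTC_integrable) (auto simp: zero_ereal_def ereal_tendsto_simps)
  then show ?thesis
    by (simp add: interval_lebesgue_integral_0_infty)
qed

lemma set_integrable_exp_neg_mult_Ioi:
  fixes a :: real
  assumes "0 < a"
  shows "set_integrable lborel {0<..} (\<lambda>t. exp (- (t * a)))"
proof -
  have "((\<lambda>t. - exp (- (t * a)) / a) \<longlongrightarrow> 0) at_top"
    using assms by real_asymp
  then have "set_integrable lborel (einterval 0 \<infinity>) (\<lambda>t. exp (- (t * a)))"
    using assms
    by (intro interval_integral_FTC_nonneg(1)[where F="\<lambda>t. - exp (- (t * a)) / a" and A="- 1 / a" and B=0])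
      (auto intro!: derivative_eq_intros tendsto_eq_intros simp: zero_ereal_def ereal_tendsto_simps field_simps)
  moreover have "einterval 0 \<infinity> = {0<..}"
    by (auto simp: einterval_def zero_ereal_def)
  ultimately show ?thesis
    by simp
qed

lemma set_integral_cexp_neg_mult_Ioi:
  fixes c :: complex
  assumes "0 < Re c"
  shows "(LINT t:{0<..}|lborel. exp (- (of_real t * c))) = 1 / c"
proof -
  have integrable: "set_integrable lborel {0<..} (\<lambda>t. exp (- (of_real t * c)))"
    using set_integrable_exp_neg_mult_Ioi[OF assms]
    by (rule set_integrable_bound) (auto simp: set_borel_measurable_def)
  have "c \<noteq> 0"
    using assms by auto
  have "((\<lambda>t. exp (- (of_real t * c))) \<longlongrightarrow> 0) at_top"
  proof (rule tendsto_norm_zero_cancel)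
    show "((\<lambda>t. norm (exp (- (of_real t * c)))) \<longlongrightarrow> 0) at_top"
      using assms by simp real_asymp
  qed
  from tendsto_divide_zero[OF tendsto_minus[OF this, simplified], of c]
  have "((\<lambda>t. - exp (- (of_real t * c)) / c) \<longlongrightarrow> 0) at_top"
    by simp
  then have "(LINT t:{0<..}|lborel. exp (- (of_real t * c))) = 0 - (- 1 / c)"
    using integrable \<open>c \<noteq> 0\<close>
    by (intro set_integral_Ioi_FTC[where F="\<lambda>t. - exp (- (of_real t * c)) / c"])
      (auto intro!: derivative_eq_intros has_vector_derivative_real_field tendsto_eq_intros continuous_intros
        simp: field_simps)
  then show ?thesis
    by simp
qed

lemma has_bochner_integral_gauss_Ioi:
  "has_bochner_integral lborel (\<lambda>t. indicator {0<..} t *\<^sub>R exp (- t\<^sup>2)) (sqrt pi / 2)"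
proof -
  have "AE t in lborel. indicator {0..} t *\<^sub>R exp (- t\<^sup>2) = indicator {0<..} t *\<^sub>R exp (- (t::real)\<^sup>2)"
    using AE_lborel_singleton[of 0] by eventually_elim (auto simp: indicator_def)
  with gaussian_moment_0 show ?thesis
    by (subst (asm) has_bochner_integral_cong_AE) auto
qed

lemma has_bochner_integral_cgauss_Ioi:
  "has_bochner_integral lborel (\<lambda>t. indicator {0<..} t *\<^sub>R exp (- (complex_of_real t)\<^sup>2)) (of_real (sqrt pi / 2))"
proof -
  have "(\<lambda>t. indicator {0<..} t *\<^sub>R exp (- (complex_of_real t)\<^sup>2))
      = (\<lambda>t. of_real (indicator {0<..} t *\<^sub>R exp (- t\<^sup>2)))"
    by (simp add: scaleR_conv_of_real flip: exp_of_real)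
  with has_bochner_integral_of_real[OF has_bochner_integral_gauss_Ioi] show ?thesis
    by (simp only:)
qed

lemma norm_exp_neg_square_le:
  fixes w :: complex
  assumes "0 \<le> t" "t \<le> Re w" "\<bar>Im w\<bar> \<le> b"
  shows "norm (exp (- w\<^sup>2)) \<le> exp (b\<^sup>2) * exp (- t\<^sup>2)"
proof -
  have "t\<^sup>2 \<le> (Re w)\<^sup>2" "(Im w)\<^sup>2 \<le> b\<^sup>2"
    using assms by (auto intro!: power_mono simp flip: abs_le_square_iff)
  then have "(Im w)\<^sup>2 - (Re w)\<^sup>2 \<le> b\<^sup>2 + - t\<^sup>2"
    by linarith
  then show ?thesis
    by (simp add: power2_eq_square flip: exp_add)
qed

lemma norm_exp_neg_square_shift_le:
  fixes z :: complex
  assumes "0 \<le> Re z" "0 \<le> t" "0 \<le> \<mu>" "\<mu> \<le> 1"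
  shows "norm (exp (- (of_real t + of_real \<mu> * z)\<^sup>2)) \<le> exp ((Im z)\<^sup>2) * exp (- t\<^sup>2)"
  using assms
  by (auto simp: abs_mult intro!: norm_exp_neg_square_le[where b="\<bar>Im z\<bar>", simplified]
      mult_left_le_one_le)

lemma set_integrable_gauss_shift_Ioi:
  fixes z :: complex
  assumes "0 \<le> Re z"
  shows "set_integrable lborel {0<..} (\<lambda>t. exp (- (of_real t + z)\<^sup>2))"
proof (rule set_integrable_bound)
  have "set_integrable lborel {0<..} (\<lambda>t::real. exp (- t\<^sup>2))"
    unfolding set_integrable_def by (rule integrable.intros[OF has_bochner_integral_gauss_Ioi])
  then show "set_integrable lborel {0<..} (\<lambda>t. exp ((Im z)\<^sup>2) * exp (- t\<^sup>2))"
    by (rule set_integrable_mult_right)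
  show "AE t\<in>{0<..} in lborel. norm (exp (- (of_real t + z)\<^sup>2)) \<le> norm (exp ((Im z)\<^sup>2) * exp (- t\<^sup>2))"
    using norm_exp_neg_square_shift_le[OF assms, of _ 1] by auto
qed (auto simp: set_borel_measurable_def)

lemma tendsto_contour_integral_gauss_segment_at_top:
  fixes z :: complex
  assumes "0 \<le> Re z"
  shows "((\<lambda>t. contour_integral (linepath (of_real t) (of_real t + z)) (\<lambda>w. exp (- w\<^sup>2))) \<longlongrightarrow> 0) at_top"
proof (rule Lim_null_comparison)
  define C where "C = exp ((Im z)\<^sup>2)"
  have bound: "norm (contour_integral (linepath (of_real t) (of_real t + z)) (\<lambda>w. exp (- w\<^sup>2)))
      \<le> C * exp (- t\<^sup>2) * norm z" if "0 \<le> t" for t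
  proof -
    have "norm (contour_integral (linepath (of_real t) (of_real t + z)) (\<lambda>w. exp (- w\<^sup>2)))
        \<le> C * exp (- t\<^sup>2) * norm (of_real t + z - of_real t)"
    proof (rule contour_integral_bound_linepath)
      show "(\<lambda>w. exp (- w\<^sup>2)) contour_integrable_on linepath (of_real t) (of_real t + z)"
        by (intro contour_integrable_continuous_linepath continuous_intros)
      fix w
      assume "w \<in> closed_segment (of_real t) (of_real t + z)"
      then obtain \<mu> where "0 \<le> \<mu>" "\<mu> \<le> 1" "w = (1 - \<mu>) *\<^sub>R of_real t + \<mu> *\<^sub>R (of_real t + z)"
        by (auto simp: closed_segment_def)
      moreover have "(1 - \<mu>) *\<^sub>R of_real t + \<mu> *\<^sub>R (of_real t + z) = of_real t + of_real \<mu> * z"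
        by (simp add: scaleR_conv_of_real algebra_simps)
      ultimately show "norm (exp (- w\<^sup>2)) \<le> C * exp (- t\<^sup>2)"
        using norm_exp_neg_square_shift_le[OF assms \<open>0 \<le> t\<close>] by (simp add: C_def)
    qed (simp add: C_def)
    then show ?thesis
      by simp
  qed
  show "\<forall>\<^sub>F t in at_top. norm (contour_integral (linepath (of_real t) (of_real t + z)) (\<lambda>w. exp (- w\<^sup>2)))
      \<le> C * exp (- t\<^sup>2) * norm z"
    using eventually_ge_at_top[of "0::real"] by eventually_elim (rule bound)
  show "((\<lambda>t. C * exp (- t\<^sup>2) * norm z) \<longlongrightarrow> 0) at_top"
    by real_asymp
qed

lemma set_integral_gauss_shift_Ioi:
  fixes z :: complex
  assumes "0 \<le> Re z"
  shows "(LINT t:{0<..}|lborel. exp (- (of_real t + z)\<^sup>2))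
      = of_real (sqrt pi / 2) - contour_integral (linepath 0 z) (\<lambda>w. exp (- w\<^sup>2))"
proof -
  define E :: "complex \<Rightarrow> complex" where "E = (\<lambda>w. exp (- w\<^sup>2))"
  have gauss_int: "set_integrable lborel {0<..} (\<lambda>t. E (of_real t))"
    and gauss_value: "(LINT t:{0<..}|lborel. E (of_real t)) = of_real (sqrt pi / 2)"
    using has_bochner_integral_cgauss_Ioi
    by (auto simp: E_def set_integrable_def set_lebesgue_integral_def has_bochner_integral_iff)
  have shift_int: "set_integrable lborel {0<..} (\<lambda>t. E (of_real t + z))"
    unfolding E_def by (rule set_integrable_gauss_shift_Ioi[OF assms])
  have "E holomorphic_on UNIV"
    unfolding E_def by (intro holomorphic_intros)
  then obtain G where G: "\<And>w. (G has_field_derivative E w) (at w)"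
    using holomorphic_convex_primitive'[of UNIV E] by auto
  have segment: "contour_integral (linepath a b) E = G b - G a" for a b
    using contour_integral_primitive[of UNIV G E "linepath a b"] G
    by (auto intro: contour_integral_unique)
  have G_diff: "((\<lambda>w. G (w + z) - G w) has_field_derivative E (w + z) - E w) (at w)" for w
    using DERIV_diff[OF DERIV_chain2[OF G DERIV_add[OF DERIV_ident DERIV_const]] G] by simp
  define D where "D t = G (of_real t + z) - G (of_real t)" for t :: real
  have diff_integral: "(LINT t:{0<..}|lborel. E (of_real t + z) - E (of_real t)) = 0 - (G z - G 0)"
  proof (rule set_integral_Ioi_FTC[where F=D])
    show "(D has_vector_derivative E (of_real t + z) - E (of_real t)) (at t)" for t
      unfolding D_def by (rule has_vector_derivative_real_field[OF G_diff])
    show "isCont (\<lambda>t. E (of_real t + z) - E (of_real t)) t" for t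
      unfolding E_def by (intro continuous_intros)
    show "set_integrable lborel {0<..} (\<lambda>t. E (of_real t + z) - E (of_real t))"
      using shift_int gauss_int by (rule set_integral_diff(1))
    have "isCont D 0"
      unfolding D_def by (rule isCont_o2[OF _ DERIV_isCont[OF G_diff]]) (intro continuous_intros)
    then show "(D \<longlongrightarrow> G z - G 0) (at_right 0)"
      by (auto simp: D_def isCont_def intro: tendsto_mono[OF at_within_le_at])
    have "D = (\<lambda>t. contour_integral (linepath (of_real t) (of_real t + z)) E)"
      by (simp add: fun_eq_iff D_def segment)
    then show "(D \<longlongrightarrow> 0) at_top"
      using tendsto_contour_integral_gauss_segment_at_top[OF assms] by (simp add: E_def)
  qed
  have "(LINT t:{0<..}|lborel. E (of_real t + z))
      = (LINT t:{0<..}|lborel. E (of_real t + z) - E (of_real t)) + (LINT t:{0<..}|lborel. E (of_real t))"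
    using shift_int gauss_int by (simp add: set_integral_diff(2))
  also have "\<dots> = of_real (sqrt pi / 2) - contour_integral (linepath 0 z) E"
    by (simp add: diff_integral gauss_value segment)
  finally show ?thesis
    by (simp add: E_def)
qed

lemma lborel_Fubini_integral_product_bound:
  fixes f :: "real \<Rightarrow> real \<Rightarrow> 'a::{banach, second_countable_topology}" and g h :: "real \<Rightarrow> real"
  assumes f: "(\<lambda>(x, y). f x y) \<in> borel_measurable (lborel \<Otimes>\<^sub>M lborel)"
    and f_le: "\<And>x y. norm (f x y) \<le> g x * h y"
    and g: "integrable lborel g" "\<And>x. 0 \<le> g x"
    and h: "integrable lborel h" "\<And>y. 0 \<le> h y"
  shows "(\<integral>y. (\<integral>x. f x y \<partial>lborel) \<partial>lborel) = (\<integral>x. (\<integral>y. f x y \<partial>lborel) \<partial>lborel)"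
proof (rule lborel_pair.Fubini_integral)
  have f_int: "integrable lborel (\<lambda>y. f x y)" for x
  proof (rule Bochner_Integration.integrable_bound)
    show "integrable lborel (\<lambda>y. g x * h y)"
      using h by simp
    show "AE y in lborel. norm (f x y) \<le> norm (g x * h y)"
      using f_le g h by (auto intro: order_trans[OF f_le])
  qed (use f in measurable)
  have norm_f_le: "norm (\<integral>y. norm (f x y) \<partial>lborel) \<le> g x * (\<integral>y. h y \<partial>lborel)" for x
  proof -
    have "(\<integral>y. norm (f x y) \<partial>lborel) \<le> (\<integral>y. g x * h y \<partial>lborel)"
      using f_int h by (intro integral_mono) (auto intro: f_le)
    then show ?thesis
      by (simp add: integral_nonneg_AE)
  qed
  show "integrable (lborel \<Otimes>\<^sub>M lborel) (\<lambda>(x, y). f x y)"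
  proof (rule lborel_pair.Fubini_integrable[OF f])
    show "integrable lborel (\<lambda>x. \<integral>y. norm (case (x, y) of (x, y) \<Rightarrow> f x y) \<partial>lborel)"
    proof (rule Bochner_Integration.integrable_bound)
      show "integrable lborel (\<lambda>x. g x * (\<integral>y. h y \<partial>lborel))"
        using g by simp
      show "AE x in lborel. norm (\<integral>y. norm (case (x, y) of (x, y) \<Rightarrow> f x y) \<partial>lborel)
          \<le> norm (g x * (\<integral>y. h y \<partial>lborel))"
        using norm_f_le by (auto intro: order_trans[OF _ abs_ge_self])
      show "(\<lambda>x. \<integral>y. norm (case (x, y) of (x, y) \<Rightarrow> f x y) \<partial>lborel) \<in> borel_measurable lborel"
        using f by (intro sigma_finite_measure.borel_measurable_lebesgue_integral) (auto intro: sigma_finite_lborel)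
    qed
  qed (use f_int in simp)
qed

lemma set_integral_Ioi_rescale:
  fixes f :: "real \<Rightarrow> 'a::{banach, second_countable_topology}"
  assumes "0 < c"
  shows "(LINT t:{0<..}|lborel. f t) = c *\<^sub>R (LINT u:{0<..}|lborel. f (c * u))"
proof -
  have "indicator {0<..} (c * u) = (indicator {0<..} u :: real)" for u
    using assms by (simp add: indicator_def zero_less_mult_iff)
  then show ?thesis
    using lborel_integral_real_affine[of c "\<lambda>t. indicator {0<..} t *\<^sub>R f t" 0] assms
    by (simp add: set_lebesgue_integral_def)
qed

lemma integral_div_Complex_eq_Laplace:
  fixes f :: "real \<Rightarrow> real"
  assumes f: "integrable lborel f" and s: "0 < s"
  shows "(CLINT \<theta>|lborel. of_real (f \<theta>) / Complex s (x - \<theta>))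
       = (CLINT t:{0<..}|lborel. exp (- (of_real t * Complex s x))
            * (CLINT \<theta>|lborel. of_real (f \<theta>) * exp (\<i> * of_real (t * \<theta>))))"
proof -
  have [measurable]: "f \<in> borel_measurable borel"
    using f by auto
  define K where "K \<theta> t = indicator {0<..} t *\<^sub>R (of_real (f \<theta>) * exp (- (of_real t * Complex s (x - \<theta>))))"
    for \<theta> t :: real
  have inner_t: "of_real (f \<theta>) / Complex s (x - \<theta>) = (\<integral>t. K \<theta> t \<partial>lborel)" for \<theta>
  proof -
    have "(\<integral>t. K \<theta> t \<partial>lborel)
        = of_real (f \<theta>) * (LINT t:{0<..}|lborel. exp (- (of_real t * Complex s (x - \<theta>))))"
      unfolding K_def set_lebesgue_integral_def
      by (subst integral_mult_right_zero[symmetric]) (simp add: mult_ac)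
    then show ?thesis
      using s by (simp add: set_integral_cexp_neg_mult_Ioi)
  qed
  have inner_\<theta>: "(\<integral>\<theta>. K \<theta> t \<partial>lborel) = indicator {0<..} t *\<^sub>R (exp (- (of_real t * Complex s x))
      * (CLINT \<theta>|lborel. of_real (f \<theta>) * exp (\<i> * of_real (t * \<theta>))))" for t
  proof -
    have "- (of_real t * Complex s (x - \<theta>)) = - (of_real t * Complex s x) + \<i> * of_real (t * \<theta>)" for \<theta>
      by (simp add: complex_eq_iff algebra_simps)
    then have "exp (- (of_real t * Complex s (x - \<theta>))) = exp (- (of_real t * Complex s x)) * exp (\<i> * of_real (t * \<theta>))"
      for \<theta>
      by (simp only: exp_add)
    then show ?thesis
      unfolding K_def by (simp add: mult_ac flip: integral_mult_right_zero)
  qed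
  have "(\<integral>\<theta>. (\<integral>t. K \<theta> t \<partial>lborel) \<partial>lborel) = (\<integral>t. (\<integral>\<theta>. K \<theta> t \<partial>lborel) \<partial>lborel)"
  proof (rule lborel_Fubini_integral_product_bound[symmetric])
    show "norm (K \<theta> t) \<le> \<bar>f \<theta>\<bar> * (indicator {0<..} t * exp (- (t * s)))" for \<theta> t
      by (simp add: K_def norm_mult indicator_def)
    show "integrable lborel (\<lambda>t. indicator {0<..} t * exp (- (t * s)))"
      using set_integrable_exp_neg_mult_Ioi[OF s] by (simp add: set_integrable_def)
    show "(\<lambda>(\<theta>, t). K \<theta> t) \<in> borel_measurable (lborel \<Otimes>\<^sub>M lborel)"
      unfolding K_def Complex_eq by measurable
  qed (use f in auto)
  then show ?thesis
    by (simp add: inner_t inner_\<theta> set_lebesgue_integral_def)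
qed

lemma integral_normal_density_cexp:
  fixes \<mu> \<sigma> t :: real
  assumes \<sigma>: "0 < \<sigma>"
  shows "(CLINT \<theta>|lborel. of_real (normal_density \<mu> \<sigma> \<theta>) * exp (\<i> * of_real (t * \<theta>)))
       = exp (\<i> * of_real (t * \<mu>) - of_real (t\<^sup>2 * \<sigma>\<^sup>2 / 2))"
proof -
  have std: "(CLINT y|lborel. std_normal_density y *\<^sub>R iexp (t * \<sigma> * y)) = of_real (exp (- (t * \<sigma>)\<^sup>2 / 2))"
  proof -
    have "char std_normal_distribution (t * \<sigma>) = of_real (exp (- (t * \<sigma>)\<^sup>2 / 2))"
      by (simp add: char_std_normal_distribution)
    then show ?thesis
      unfolding char_def by (subst (asm) integral_density) auto
  qed
  have affine: "normal_density \<mu> \<sigma> (\<mu> + \<sigma> * y) = std_normal_density y / \<sigma>" for y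
    using \<sigma> by (simp add: normal_density_def real_sqrt_mult power_mult_distrib field_simps)
  have "(CLINT \<theta>|lborel. of_real (normal_density \<mu> \<sigma> \<theta>) * exp (\<i> * of_real (t * \<theta>)))
      = \<sigma> *\<^sub>R (CLINT y|lborel. of_real (normal_density \<mu> \<sigma> (\<mu> + \<sigma> * y)) * exp (\<i> * of_real (t * (\<mu> + \<sigma> * y))))"
    using lborel_integral_real_affine[of \<sigma> "\<lambda>\<theta>. of_real (normal_density \<mu> \<sigma> \<theta>) * exp (\<i> * of_real (t * \<theta>))" \<mu>] \<sigma>
    by simp
  also have "\<dots> = \<sigma> *\<^sub>R (CLINT y|lborel. (exp (\<i> * of_real (t * \<mu>)) / \<sigma>) * (std_normal_density y *\<^sub>R iexp (t * \<sigma> * y)))"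
    using \<sigma> by (intro arg_cong2[where f="(*\<^sub>R)"] Bochner_Integration.integral_cong refl)
      (simp add: affine distrib_left exp_add scaleR_conv_of_real mult.assoc)
  also have "\<dots> = \<sigma> *\<^sub>R ((exp (\<i> * of_real (t * \<mu>)) / \<sigma>) * of_real (exp (- (t * \<sigma>)\<^sup>2 / 2)))"
    by (simp only: integral_mult_right_zero std)
  also have "\<dots> = exp (\<i> * of_real (t * \<mu>)) * of_real (exp (- (t * \<sigma>)\<^sup>2 / 2))"
    using \<sigma> by (simp add: scaleR_conv_of_real)
  also have "\<dots> = exp (\<i> * of_real (t * \<mu>) - of_real (t\<^sup>2 * \<sigma>\<^sup>2 / 2))"
  proof -
    have "- (t * \<sigma>)\<^sup>2 / 2 = - (t\<^sup>2 * \<sigma>\<^sup>2 / 2)"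
      by (simp add: power_mult_distrib)
    then have "complex_of_real (exp (- (t * \<sigma>)\<^sup>2 / 2)) = exp (- of_real (t\<^sup>2 * \<sigma>\<^sup>2 / 2))"
      by (simp only: of_real_minus flip: exp_of_real)
    then show ?thesis
      by (simp only: diff_conv_add_uminus exp_add)
  qed
  finally show ?thesis .
qed

lemma erfcx_eq_set_integral_Ioi:
  fixes z :: complex
  assumes "0 \<le> Re z"
  shows "erfcx z = of_real (2 / sqrt pi) * (LINT t:{0<..}|lborel. exp (- ((of_real t)\<^sup>2 + 2 * of_real t * z)))"
proof -
  have "exp (- ((of_real t)\<^sup>2 + 2 * of_real t * z)) = exp (z\<^sup>2) * exp (- (of_real t + z)\<^sup>2)" for t
    by (simp add: power2_eq_square algebra_simps flip: exp_add)
  then have "(LINT t:{0<..}|lborel. exp (- ((of_real t)\<^sup>2 + 2 * of_real t * z)))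
      = exp (z\<^sup>2) * (of_real (sqrt pi / 2) - contour_integral (linepath 0 z) (\<lambda>w. exp (- w\<^sup>2)))"
    using assms by (simp add: set_integral_gauss_shift_Ioi)
  moreover have "complex_of_real (sqrt pi) \<noteq> 0"
    by simp
  ultimately show ?thesis
    by (simp add: erfcx_def field_simps)
qed

lemma integral_normal_density_div_Complex:
  fixes \<mu> \<sigma> s x :: real
  assumes \<sigma>: "0 < \<sigma>" and s: "0 < s"
  shows "(CLINT \<theta>|lborel. of_real (normal_density \<mu> \<sigma> \<theta>) / Complex s (x - \<theta>))
       = of_real (sqrt (pi / 2) / \<sigma>) * erfcx (Complex s (x - \<mu>) / of_real (\<sigma> * sqrt 2))"
proof -
  define k where "k = 2 / (\<sigma> * sqrt 2)"
  define z where "z = Complex s (x - \<mu>) / of_real (\<sigma> * sqrt 2)"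
  have k: "0 < k"
    using \<sigma> by (simp add: k_def)
  have kz: "of_real k * Complex s (x - \<mu>) = 2 * z"
    by (simp add: k_def z_def)
  have k\<sigma>: "k\<^sup>2 * \<sigma>\<^sup>2 = 2"
    using \<sigma> by (simp add: k_def power_divide power_mult_distrib)
  have exponent: "- (of_real (k * u) * Complex s x) + (\<i> * of_real (k * u * \<mu>) - of_real ((k * u)\<^sup>2 * \<sigma>\<^sup>2 / 2))
      = - ((of_real u)\<^sup>2 + 2 * of_real u * z)" for u
  proof -
    have "- (of_real (k * u) * Complex s x) + \<i> * of_real (k * u * \<mu>)
        = - (of_real u * (of_real k * Complex s (x - \<mu>)))"
      by (simp add: complex_eq_iff algebra_simps)
    moreover have "(k * u)\<^sup>2 * \<sigma>\<^sup>2 / 2 = (k\<^sup>2 * \<sigma>\<^sup>2) * u\<^sup>2 / 2"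
      by (simp add: power_mult_distrib mult_ac)
    then have "of_real ((k * u)\<^sup>2 * \<sigma>\<^sup>2 / 2) = (of_real u :: complex)\<^sup>2"
      by (simp add: k\<sigma>)
    ultimately show ?thesis
      by (simp add: kz algebra_simps)
  qed
  have Re_z: "0 \<le> Re z"
    using s \<sigma> by (simp add: z_def)
  have "(CLINT \<theta>|lborel. of_real (normal_density \<mu> \<sigma> \<theta>) / Complex s (x - \<theta>))
      = (CLINT t:{0<..}|lborel. exp (- (of_real t * Complex s x)) * exp (\<i> * of_real (t * \<mu>) - of_real (t\<^sup>2 * \<sigma>\<^sup>2 / 2)))"
    by (simp only: integral_div_Complex_eq_Laplace[OF integrable_normal_density[OF \<sigma>] s]
        integral_normal_density_cexp[OF \<sigma>])
  also have "\<dots> = k *\<^sub>R (CLINT u:{0<..}|lborel. exp (- ((of_real u)\<^sup>2 + 2 * of_real u * z)))"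
    by (subst set_integral_Ioi_rescale[OF k]) (simp only: exponent flip: exp_add)
  also have "\<dots> = of_real (k * sqrt pi / 2) * erfcx z"
    using Re_z by (simp add: erfcx_eq_set_integral_Ioi scaleR_conv_of_real)
  also have "k * sqrt pi / 2 = sqrt (pi / 2) / \<sigma>"
    by (simp add: k_def real_sqrt_divide)
  finally show ?thesis
    by (simp add: z_def)
qed

lemma cauchy_density_centered_eq:
  "cauchy_density 0 s y = s / (pi * (s\<^sup>2 + y\<^sup>2))"
proof (cases "s = 0")
  case False
  then have "0 < s\<^sup>2 + y\<^sup>2"
    by (simp add: add_pos_nonneg)
  with False have "pi * s * (1 + (y / s)\<^sup>2) = pi * (s\<^sup>2 + y\<^sup>2) / s"
    by (simp add: field_simps power2_eq_square)
  then show ?thesis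
    by (simp add: cauchy_density_def)
qed (simp add: cauchy_density_def)

lemma mult_cauchy_density_centered_eq_Re:
  "a * cauchy_density 0 s y = Re (of_real a / Complex s y) / pi"
  by (simp add: cauchy_density_centered_eq Re_divide cmod_def)

lemma mult_cauchy_density_centered_eq_Im:
  "a * y * cauchy_density 0 s y = - s * Im (of_real a / Complex s y) / pi"
  by (simp add: cauchy_density_centered_eq Im_divide cmod_def mult_ac)

lemma integrable_div_Complex:
  fixes f :: "real \<Rightarrow> real"
  assumes "integrable lborel f" and "0 < s"
  shows "integrable lborel (\<lambda>\<theta>. of_real (f \<theta>) / Complex s (x - \<theta>))"
proof (rule Bochner_Integration.integrable_bound)
  show "integrable lborel (\<lambda>\<theta>. \<bar>f \<theta>\<bar> / s)"
    using assms by simp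
  have "\<bar>f \<theta>\<bar> / norm (Complex s (x - \<theta>)) \<le> \<bar>f \<theta>\<bar> / s" for \<theta>
    using abs_Re_le_cmod[of "Complex s (x - \<theta>)"] assms(2) by (intro frac_le) auto
  then show "AE \<theta> in lborel. norm (of_real (f \<theta>) / Complex s (x - \<theta>)) \<le> norm (\<bar>f \<theta>\<bar> / s)"
    using assms(2) by (simp add: norm_divide)
qed (use assms(1) in \<open>simp add: Complex_eq\<close>)

lemma integral_lborel_pos:
  fixes f :: "'a::euclidean_space \<Rightarrow> real"
  assumes "integrable lborel f" and "\<And>x. 0 < f x"
  shows "0 < integral\<^sup>L lborel f"
proof -
  have "integral\<^sup>L lborel f \<noteq> 0"
  proof
    assume "integral\<^sup>L lborel f = 0"
    then have "AE x in lborel. f x = 0"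
      using assms by (subst (asm) integral_nonneg_eq_0_iff_AE) (auto intro: less_imp_le)
    then have "AE x::'a in lborel. False"
      by eventually_elim (metis assms(2) less_irrefl)
    then show False
      by (simp add: AE_iff_measurable[of UNIV])
  qed
  moreover have "0 \<le> integral\<^sup>L lborel f"
    using assms by (intro integral_nonneg_AE) (auto intro: less_imp_le)
  ultimately show ?thesis
    by simp
qed

lemma posterior_mean_cauchy_density:
  fixes f :: "real \<Rightarrow> real"
  assumes f: "integrable lborel f" "\<And>\<theta>. 0 < f \<theta>" and s: "0 < s"
  shows "posterior_mean f (cauchy_density 0 s) x
       = x + s * Im (CLINT \<theta>|lborel. of_real (f \<theta>) / Complex s (x - \<theta>))
               / Re (CLINT \<theta>|lborel. of_real (f \<theta>) / Complex s (x - \<theta>))"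
proof -
  define J where "J = (CLINT \<theta>|lborel. of_real (f \<theta>) / Complex s (x - \<theta>))"
  have J_int: "integrable lborel (\<lambda>\<theta>. of_real (f \<theta>) / Complex s (x - \<theta>))"
    using f(1) s by (rule integrable_div_Complex)
  have Re_eq: "f \<theta> * cauchy_density 0 s (x - \<theta>) = Re (of_real (f \<theta>) / Complex s (x - \<theta>)) / pi" for \<theta>
    by (rule mult_cauchy_density_centered_eq_Re)
  have Im_eq: "\<theta> * f \<theta> * cauchy_density 0 s (x - \<theta>)
      = x * (f \<theta> * cauchy_density 0 s (x - \<theta>)) + s * Im (of_real (f \<theta>) / Complex s (x - \<theta>)) / pi" for \<theta>
    using mult_cauchy_density_centered_eq_Im[of "f \<theta>" "x - \<theta>" s] by (simp add: algebra_simps)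
  have den: "(LINT \<theta>|lborel. f \<theta> * cauchy_density 0 s (x - \<theta>)) = Re J / pi"
    using J_int by (simp add: J_def Re_eq)
  have num: "(LINT \<theta>|lborel. \<theta> * f \<theta> * cauchy_density 0 s (x - \<theta>)) = x * (Re J / pi) + s * Im J / pi"
    using J_int by (simp add: Im_eq den J_def Re_eq)
  have "0 < (LINT \<theta>|lborel. f \<theta> * cauchy_density 0 s (x - \<theta>))"
  proof (rule integral_lborel_pos)
    show "integrable lborel (\<lambda>\<theta>. f \<theta> * cauchy_density 0 s (x - \<theta>))"
      using J_int by (simp add: Re_eq)
    show "0 < f \<theta> * cauchy_density 0 s (x - \<theta>)" for \<theta>
      using f(2)[of \<theta>] s by (simp add: cauchy_density_centered_eq add_pos_nonneg)
  qed
  then have "0 < Re J"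
    by (simp add: den zero_less_divide_iff)
  have "posterior_mean f (cauchy_density 0 s) x = (x * (Re J / pi) + s * Im J / pi) / (Re J / pi)"
    by (simp only: posterior_mean_def num den)
  also have "\<dots> = x + s * Im J / Re J"
    using \<open>0 < Re J\<close> by (simp add: field_simps)
  finally show ?thesis
    by (simp only: J_def)
qed

theorem mainTheorem5:
  fixes \<sigma>0 \<sigma>\<epsilon> \<theta>0 x :: real
  assumes "\<sigma>0 > 0" and "\<sigma>\<epsilon> > 0"
  defines "x0 \<equiv> (x - \<theta>0) / \<sigma>0"
      and "a \<equiv> \<sigma>\<epsilon> / \<sigma>0"
  defines "z \<equiv> Complex a x0 / complex_of_real (sqrt 2)"
  shows "posterior_mean (normal_density \<theta>0 \<sigma>0) (cauchy_density 0 \<sigma>\<epsilon>) x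
           = x + \<sigma>\<epsilon> * Im (erfcx z) / Re (erfcx z)"
proof -
  define r where "r = sqrt (pi / 2) / \<sigma>0"
  have "0 < r"
    using assms(1) by (simp add: r_def)
  have "z = Complex \<sigma>\<epsilon> (x - \<theta>0) / of_real (\<sigma>0 * sqrt 2)"
    using assms(1) by (simp add: z_def a_def x0_def complex_eq_iff)
  then have "(CLINT \<theta>|lborel. of_real (normal_density \<theta>0 \<sigma>0 \<theta>) / Complex \<sigma>\<epsilon> (x - \<theta>)) = of_real r * erfcx z"
    using assms(1,2) by (simp add: integral_normal_density_div_Complex r_def)
  then have "posterior_mean (normal_density \<theta>0 \<sigma>0) (cauchy_density 0 \<sigma>\<epsilon>) x
      = x + \<sigma>\<epsilon> * Im (of_real r * erfcx z) / Re (of_real r * erfcx z)"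
    using assms(1,2) by (simp add: posterior_mean_cauchy_density normal_density_pos)
  with \<open>0 < r\<close> show ?thesis
    by simp
qed

end
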